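(* For every $\alpha>0$, the Alexander operator $C_0(f)(z)=\int_0^z\frac{f(w)}{w}\,dw$ is a bounded linear operator from $(\mathcal{B}_\alpha^0,\|\cdot\|_{\mathcal{B}_\alpha})$ to itself, and its operator norm equals $1$.
   Context: $\mathbb{D}=\{z\in\mathbb{C}:|z|<1\}$. For $\alpha>0$, the $\alpha$-Bloch space $\mathcal{B}_\alpha$ is the space of analytic functions $f$ on $\mathbb{D}$ with $\|f\|_{\mathcal{B}_\alpha}:=\sup_{z\in\mathbb{D}}(1-|z|^2)^\alpha|f'(z)|<\infty$. $\mathcal{B}_\alpha^0=\{f\in\mathcal{B}_\alpha: f(0)=0\}$, normed by $\|\cdot\|_{\mathcal{B}_\alpha}$. *)

theory Defs
  imports "HOL-Complex_Analysis.Complex_Analysis"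
begin

definition bloch_weight :: "real \<Rightarrow> (complex \<Rightarrow> complex) \<Rightarrow> complex \<Rightarrow> real" where
  "bloch_weight \<alpha> f z = (1 - (cmod z)\<^sup>2) powr \<alpha> * cmod (deriv f z)"

text \<open>The alpha-Bloch space (functions analytic on the unit disc; values outside are irrelevant).\<close>
definition bloch_space :: "real \<Rightarrow> (complex \<Rightarrow> complex) set" where
  "bloch_space \<alpha> = {f. f holomorphic_on ball 0 1 \<and> bdd_above (bloch_weight \<alpha> f ` ball 0 1)}"

definition bloch_norm :: "real \<Rightarrow> (complex \<Rightarrow> complex) \<Rightarrow> real" where
  "bloch_norm \<alpha> f = (SUP z\<in>ball 0 1. bloch_weight \<alpha> f z)"

definition bloch_space0 :: "real \<Rightarrow> (complex \<Rightarrow> complex) set" where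
  "bloch_space0 \<alpha> = {f \<in> bloch_space \<alpha>. f 0 = 0}"

definition alexander_op :: "(complex \<Rightarrow> complex) \<Rightarrow> complex \<Rightarrow> complex" where
  "alexander_op f z = contour_integral (linepath 0 z) (\<lambda>w. f w / w)"

end

theory Submission
  imports Defs
begin

text \<open>For \<open>f\<close> analytic on the disc with \<open>f 0 = 0\<close>, the integrand \<open>f w / w\<close> has a removable
  singularity at 0, so \<open>C\<^sub>0 f\<close> is a primitive of it and \<open>(C\<^sub>0 f)' z = f z / z\<close>.
  Integrating \<open>f'\<close> along \<open>[0, z]\<close>, where the weight \<open>(1 - |w|\<^sup>2)\<^sup>\<alpha>\<close> is at least
  \<open>(1 - |z|\<^sup>2)\<^sup>\<alpha>\<close>, gives \<open>|f z| \<le> |z| \<parallel>f\<parallel> / (1 - |z|\<^sup>2)\<^sup>\<alpha>\<close>, hence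
  \<open>(1 - |z|\<^sup>2)\<^sup>\<alpha> |(C\<^sub>0 f)' z| \<le> \<parallel>f\<parallel>\<close>. The identity is a fixed point of \<open>C\<^sub>0\<close> of norm 1,
  so the operator norm is exactly 1.\<close>

definition div_by_z :: "(complex \<Rightarrow> complex) \<Rightarrow> complex \<Rightarrow> complex" where
  "div_by_z f = (\<lambda>w. if w = 0 then deriv f 0 else f w / w)"

lemma holomorphic_on_div_by_z:
  assumes "f holomorphic_on S" "0 \<in> interior S" "f 0 = 0"
  shows "div_by_z f holomorphic_on S"
proof -
  have "(\<lambda>w. if w = 0 then deriv f 0 else (f w - f 0) / (w - 0)) = div_by_z f"
    by (rule ext) (simp add: div_by_z_def assms(3))
  then show ?thesis
    using pole_lemma[OF assms(1,2)] by simp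
qed

lemma has_field_derivative_contour_integral_linepath:
  assumes "h holomorphic_on S" "open S" "convex S" "a \<in> S" "x \<in> S"
  shows "((\<lambda>x. contour_integral (linepath a x) h) has_field_derivative h x) (at x)"
proof (rule triangle_contour_integrals_starlike_primitive[of S h a])
  show "continuous_on S h"
    using assms(1) holomorphic_on_imp_continuous_on by blast
  show "closed_segment a y \<subseteq> S" if "y \<in> S" for y
    using that assms(3,4) by (simp add: closed_segment_subset)
  fix b c assume bc: "closed_segment b c \<subseteq> S"
  then have "b \<in> S" "c \<in> S" by auto
  then have "(h has_contour_integral 0) (linepath a b +++ linepath b c +++ linepath c a)"
    using assms(3,4) bc
    by (intro Cauchy_theorem_convex_simple[OF assms(1,3)])
       (auto simp: valid_path_join path_image_join closed_segment_subset)
  then show "contour_integral (linepath a b) h + contour_integral (linepath b c) h +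
      contour_integral (linepath c a) h = 0"
    by (rule has_chain_integral_chain_integral3)
qed (use assms in auto)

lemma alexander_op_eq_div_by_z:
  "alexander_op f z = contour_integral (linepath 0 z) (div_by_z f)"
proof (cases "z = 0")
  case False
  show ?thesis unfolding alexander_op_def
    by (rule contour_integral_spike_finite_simple_path[of "{0}"])
       (use False in \<open>auto simp: div_by_z_def simple_path_linepath\<close>)
qed (simp add: alexander_op_def)

lemma has_field_derivative_alexander_op:
  assumes "f holomorphic_on S" "open S" "convex S" "0 \<in> S" "f 0 = 0" "z \<in> S"
  shows "(alexander_op f has_field_derivative div_by_z f z) (at z)"
  using has_field_derivative_contour_integral_linepath[OF
      holomorphic_on_div_by_z[of f S] assms(2-4,6)] assms
  by (simp add: interior_open alexander_op_eq_div_by_z[abs_def])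

lemma alexander_op_linear:
  assumes f: "f holomorphic_on S" "f 0 = 0" and g: "g holomorphic_on S" "g 0 = 0"
    and S: "open S" "convex S" "0 \<in> S" and z: "z \<in> S"
  shows "alexander_op (\<lambda>w. a * f w + b * g w) z = a * alexander_op f z + b * alexander_op g z"
proof (cases "z = 0")
  case False
  have seg: "closed_segment 0 z \<subseteq> S"
    using S z by (simp add: closed_segment_subset)
  have integrable: "div_by_z h contour_integrable_on linepath 0 z"
    if "h holomorphic_on S" "h 0 = 0" for h
  proof -
    have "div_by_z h holomorphic_on S"
      using holomorphic_on_div_by_z[OF that(1) _ that(2)] S by (simp add: interior_open)
    then show ?thesis
      using seg by (meson contour_integrable_continuous_linepath continuous_on_subset
          holomorphic_on_imp_continuous_on)
  qed
  have "div_by_z (\<lambda>w. a * f w + b * g w) w = a * div_by_z f w + b * div_by_z g w"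
    if "w \<noteq> 0" for w
    using that by (simp add: div_by_z_def add_divide_distrib)
  then have "alexander_op (\<lambda>w. a * f w + b * g w) z
      = contour_integral (linepath 0 z) (\<lambda>w. a * div_by_z f w + b * div_by_z g w)"
    unfolding alexander_op_def
    by (intro contour_integral_spike_finite_simple_path[of "{0}"])
       (use False in \<open>auto simp: div_by_z_def simple_path_linepath add_divide_distrib\<close>)
  also have "\<dots> = a * alexander_op f z + b * alexander_op g z"
    using integrable[OF f] integrable[OF g]
    by (simp add: contour_integral_add contour_integral_lmul contour_integrable_lmul
        alexander_op_eq_div_by_z)
  finally show ?thesis .
qed (simp add: alexander_op_def)

lemma alexander_op_id: "alexander_op (\<lambda>w. w) = (\<lambda>w. w)"
proof
  fix z :: complex
  show "alexander_op (\<lambda>w. w) z = z"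
  proof (cases "z = 0")
    case False
    then have "alexander_op (\<lambda>w. w) z = contour_integral (linepath 0 z) (\<lambda>w. 1)"
      unfolding alexander_op_def
      by (intro contour_integral_spike_finite_simple_path[of "{0}"])
         (auto simp: simple_path_linepath)
    then show ?thesis by simp
  qed (simp add: alexander_op_def)
qed

lemma bloch_weight_le_bloch_norm:
  assumes "f \<in> bloch_space \<alpha>" "z \<in> ball 0 1"
  shows "bloch_weight \<alpha> f z \<le> bloch_norm \<alpha> f"
  using assms unfolding bloch_space_def bloch_norm_def by (auto intro: cSUP_upper)

lemma bloch_norm_nonneg:
  assumes "f \<in> bloch_space \<alpha>"
  shows "0 \<le> bloch_norm \<alpha> f"
proof -
  have "0 \<le> bloch_weight \<alpha> f 0" by (simp add: bloch_weight_def)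
  also have "\<dots> \<le> bloch_norm \<alpha> f" by (rule bloch_weight_le_bloch_norm[OF assms]) simp
  finally show ?thesis .
qed

lemma norm_deriv_le_bloch_norm:
  assumes f: "f \<in> bloch_space \<alpha>" and "\<alpha> \<ge> 0" and w: "cmod w \<le> cmod z" and z: "cmod z < 1"
  shows "cmod (deriv f w) \<le> bloch_norm \<alpha> f / (1 - (cmod z)\<^sup>2) powr \<alpha>"
proof -
  have pos: "0 < 1 - (cmod z)\<^sup>2"
    using z by (simp add: abs_square_less_1)
  have "(1 - (cmod z)\<^sup>2) powr \<alpha> \<le> (1 - (cmod w)\<^sup>2) powr \<alpha>"
    using pos w \<open>\<alpha> \<ge> 0\<close> by (intro powr_mono2) (auto simp: power_mono)
  then have "(1 - (cmod z)\<^sup>2) powr \<alpha> * cmod (deriv f w) \<le> bloch_weight \<alpha> f w"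
    unfolding bloch_weight_def by (simp add: mult_right_mono)
  also have "\<dots> \<le> bloch_norm \<alpha> f"
    using w z by (intro bloch_weight_le_bloch_norm[OF f]) simp
  finally show ?thesis
    using pos by (simp add: field_simps)
qed

lemma norm_le_bloch_norm:
  assumes f: "f \<in> bloch_space \<alpha>" "f 0 = 0" and "\<alpha> \<ge> 0" and z: "z \<in> ball 0 1"
  shows "cmod (f z) \<le> cmod z * (bloch_norm \<alpha> f / (1 - (cmod z)\<^sup>2) powr \<alpha>)"
proof -
  have hol: "f holomorphic_on ball 0 1"
    using f unfolding bloch_space_def by auto
  have seg: "closed_segment 0 z \<subseteq> ball 0 1"
    using z by (simp add: closed_segment_subset)
  have "cmod (f z - f 0) \<le> bloch_norm \<alpha> f / (1 - (cmod z)\<^sup>2) powr \<alpha> * cmod (z - 0)"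
  proof (rule field_differentiable_bound[of "closed_segment 0 z" f "deriv f"])
    fix w assume w: "w \<in> closed_segment 0 z"
    then have "w \<in> ball 0 1" using seg by auto
    then show "(f has_field_derivative deriv f w) (at w within closed_segment 0 z)"
      using hol by (meson DERIV_deriv_iff_field_differentiable has_field_derivative_at_within
          holomorphic_on_imp_differentiable_at open_ball)
    have "cmod w \<le> cmod z"
      using segment_bound1[OF w] by simp
    then show "cmod (deriv f w) \<le> bloch_norm \<alpha> f / (1 - (cmod z)\<^sup>2) powr \<alpha>"
      using z by (intro norm_deriv_le_bloch_norm[OF f(1) \<open>\<alpha> \<ge> 0\<close>]) auto
  qed auto
  then show ?thesis
    using f(2) by (simp add: mult.commute)
qed

lemma bloch_weight_alexander_op_le:
  assumes f: "f \<in> bloch_space0 \<alpha>" and "\<alpha> \<ge> 0" and z: "z \<in> ball 0 1"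
  shows "bloch_weight \<alpha> (alexander_op f) z \<le> bloch_norm \<alpha> f"
proof -
  have f1: "f \<in> bloch_space \<alpha>" "f 0 = 0" and hol: "f holomorphic_on ball 0 1"
    using f by (auto simp: bloch_space0_def bloch_space_def)
  have deriv_eq: "deriv (alexander_op f) z = div_by_z f z"
    using has_field_derivative_alexander_op[OF hol _ _ _ f1(2) z] DERIV_imp_deriv by simp
  show ?thesis
  proof (cases "z = 0")
    case True
    then show ?thesis
      using bloch_weight_le_bloch_norm[OF f1(1), of 0] deriv_eq
      by (simp add: bloch_weight_def div_by_z_def)
  next
    case False
    have "0 < 1 - (cmod z)\<^sup>2"
      using z by (simp add: abs_square_less_1)
    then have pos: "0 < (1 - (cmod z)\<^sup>2) powr \<alpha>"
      by simp
    have "bloch_weight \<alpha> (alexander_op f) z = (1 - (cmod z)\<^sup>2) powr \<alpha> * (cmod (f z) / cmod z)"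
      using deriv_eq False by (simp add: bloch_weight_def div_by_z_def norm_divide)
    also have "\<dots> \<le> (1 - (cmod z)\<^sup>2) powr \<alpha> * (bloch_norm \<alpha> f / (1 - (cmod z)\<^sup>2) powr \<alpha>)"
      using norm_le_bloch_norm[OF f1 \<open>\<alpha> \<ge> 0\<close> z] False pos
      by (intro mult_left_mono) (auto simp: field_simps)
    also have "\<dots> = bloch_norm \<alpha> f"
      using pos by simp
    finally show ?thesis .
  qed
qed

lemma alexander_op_bloch_space0:
  assumes f: "f \<in> bloch_space0 \<alpha>" and "\<alpha> \<ge> 0"
  shows "alexander_op f \<in> bloch_space0 \<alpha>"
proof -
  have "f holomorphic_on ball 0 1" "f 0 = 0"
    using f by (auto simp: bloch_space0_def bloch_space_def)
  then have "(alexander_op f has_field_derivative div_by_z f z) (at z)" if "z \<in> ball 0 1" for z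
    using that by (intro has_field_derivative_alexander_op[of f "ball 0 1"]) auto
  then have "alexander_op f holomorphic_on ball 0 1"
    unfolding holomorphic_on_open[OF open_ball] by blast
  moreover have "bdd_above (bloch_weight \<alpha> (alexander_op f) ` ball 0 1)"
    using bloch_weight_alexander_op_le[OF assms] by (intro bdd_aboveI2)
  ultimately show ?thesis
    by (simp add: bloch_space0_def bloch_space_def alexander_op_def)
qed

lemma bloch_norm_alexander_op_le:
  assumes "f \<in> bloch_space0 \<alpha>" "\<alpha> \<ge> 0"
  shows "bloch_norm \<alpha> (alexander_op f) \<le> bloch_norm \<alpha> f"
  unfolding bloch_norm_def[of _ "alexander_op f"]
  using bloch_weight_alexander_op_le[OF assms] by (intro cSUP_least) auto

lemma id_bloch_space0:
  assumes "\<alpha> \<ge> 0"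
  shows "(\<lambda>w. w) \<in> bloch_space0 \<alpha>" and "bloch_norm \<alpha> (\<lambda>w. w) = 1"
proof -
  have weight_le: "bloch_weight \<alpha> (\<lambda>w. w) z \<le> 1" if "z \<in> ball 0 1" for z
  proof -
    have "0 \<le> 1 - (cmod z)\<^sup>2"
      using that by (simp add: abs_square_le_1)
    then have "(1 - (cmod z)\<^sup>2) powr \<alpha> \<le> 1 powr \<alpha>"
      using assms by (intro powr_mono2) auto
    then show ?thesis by (simp add: bloch_weight_def)
  qed
  show id: "(\<lambda>w. w) \<in> bloch_space0 \<alpha>"
    unfolding bloch_space0_def bloch_space_def using weight_le
    by (auto intro!: bdd_aboveI2)
  have "bloch_weight \<alpha> (\<lambda>w. w) 0 = 1" by (simp add: bloch_weight_def)
  then have "1 \<le> bloch_norm \<alpha> (\<lambda>w. w)"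
    using bloch_weight_le_bloch_norm[of "\<lambda>w. w" \<alpha> 0] id by (simp add: bloch_space0_def)
  moreover have "bloch_norm \<alpha> (\<lambda>w. w) \<le> 1"
    unfolding bloch_norm_def using weight_le by (intro cSUP_least) auto
  ultimately show "bloch_norm \<alpha> (\<lambda>w. w) = 1" by simp
qed

theorem theorem2p5:
  fixes \<alpha> :: real
  assumes "\<alpha> > 0"
  shows "(\<forall>f\<in>bloch_space0 \<alpha>. alexander_op f \<in> bloch_space0 \<alpha>)
    \<and> (\<forall>f\<in>bloch_space0 \<alpha>. \<forall>g\<in>bloch_space0 \<alpha>. \<forall>a b :: complex. \<forall>z\<in>ball 0 1.
          alexander_op (\<lambda>w. a * f w + b * g w) z = a * alexander_op f z + b * alexander_op g z)
    \<and> (\<exists>M. \<forall>f\<in>bloch_space0 \<alpha>. bloch_norm \<alpha> (alexander_op f) \<le> M * bloch_norm \<alpha> f)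
    \<and> (SUP f\<in>{f\<in>bloch_space0 \<alpha>. bloch_norm \<alpha> f \<noteq> 0}.
          bloch_norm \<alpha> (alexander_op f) / bloch_norm \<alpha> f) = 1"
proof -
  have \<alpha>: "\<alpha> \<ge> 0" using assms by simp
  define S where "S = {f\<in>bloch_space0 \<alpha>. bloch_norm \<alpha> f \<noteq> 0}"
  define ratio where "ratio f = bloch_norm \<alpha> (alexander_op f) / bloch_norm \<alpha> f" for f
  have ratio_le: "ratio f \<le> 1" if "f \<in> S" for f
    using that bloch_norm_alexander_op_le[OF _ \<alpha>, of f] bloch_norm_nonneg[of f \<alpha>]
    by (auto simp: S_def ratio_def bloch_space0_def)
  have id: "(\<lambda>w. w) \<in> S" "ratio (\<lambda>w. w) = 1"
    using id_bloch_space0[OF \<alpha>] by (auto simp: S_def ratio_def alexander_op_id)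
  have "(SUP f\<in>S. ratio f) = 1"
    using id ratio_le
    by (intro antisym cSUP_least) (auto intro!: cSUP_upper2[of _ _ "\<lambda>w. w"] bdd_aboveI2)
  moreover have "alexander_op (\<lambda>w. a * f w + b * g w) z = a * alexander_op f z + b * alexander_op g z"
    if "f \<in> bloch_space0 \<alpha>" "g \<in> bloch_space0 \<alpha>" "z \<in> ball 0 1" for f g a b z
    using that by (intro alexander_op_linear[of f "ball 0 1"])
      (auto simp: bloch_space0_def bloch_space_def)
  moreover have "\<forall>f\<in>bloch_space0 \<alpha>. bloch_norm \<alpha> (alexander_op f) \<le> 1 * bloch_norm \<alpha> f"
    using bloch_norm_alexander_op_le[OF _ \<alpha>] by simp
  ultimately show ?thesis
    using alexander_op_bloch_space0[OF _ \<alpha>] unfolding S_def ratio_def by blast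
qed

end
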